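(* For every positive integer $k$, $NPO(k)$ is well defined (finite) and $NPO(k) \le R(k,k+1)$.
   Context: All graphs are finite, simple and undirected; $A(G)$ denotes the adjacency matrix of $G$. Eigenvalues are counted with multiplicity. For a positive integer $k$, $NPO(k)$ is the smallest integer $n$ such that the adjacency matrix of every graph with at least $n$ vertices has at least $k$ nonpositive eigenvalues. The Ramsey number $R(m,n)$ is the minimum number $N$ such that every graph on at least $N$ vertices has either an independent set of size $m$ or an induced subgraph isomorphic to the complete graph $K_n$. *)

theory Defs
  imports "Jordan_Normal_Form.Char_Poly"
begin

text \<open>A finite simple graph on the vertex set {0..<n}, given by a symmetric irreflexive
  adjacency relation (only its values on {0..<n} matter).\<close>
definition simple_graph :: "nat \<Rightarrow> (nat \<Rightarrow> nat \<Rightarrow> bool) \<Rightarrow> bool" where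
  "simple_graph n E \<longleftrightarrow> (\<forall>i<n. \<forall>j<n. E i j = E j i) \<and> (\<forall>i<n. \<not> E i i)"

definition adj_matrix :: "nat \<Rightarrow> (nat \<Rightarrow> nat \<Rightarrow> bool) \<Rightarrow> real mat" where
  "adj_matrix n E = mat n n (\<lambda>(i, j). if E i j then 1 else 0)"

definition num_nonpos_eigenvalues :: "real mat \<Rightarrow> nat" where
  "num_nonpos_eigenvalues A =
     (\<Sum>a\<in>{a. eigenvalue A a \<and> a \<le> 0}. order a (char_poly A))"

definition NPO_prop :: "nat \<Rightarrow> nat \<Rightarrow> bool" where
  "NPO_prop k n \<longleftrightarrow> (\<forall>m\<ge>n. \<forall>E. simple_graph m E \<longrightarrow> k \<le> num_nonpos_eigenvalues (adj_matrix m E))"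

definition NPO :: "nat \<Rightarrow> nat" where
  "NPO k = (LEAST n. NPO_prop k n)"

definition independent_set :: "nat \<Rightarrow> (nat \<Rightarrow> nat \<Rightarrow> bool) \<Rightarrow> nat set \<Rightarrow> bool" where
  "independent_set n E S \<longleftrightarrow> S \<subseteq> {0..<n} \<and> (\<forall>i\<in>S. \<forall>j\<in>S. \<not> E i j)"

definition clique :: "nat \<Rightarrow> (nat \<Rightarrow> nat \<Rightarrow> bool) \<Rightarrow> nat set \<Rightarrow> bool" where
  "clique n E S \<longleftrightarrow> S \<subseteq> {0..<n} \<and> (\<forall>i\<in>S. \<forall>j\<in>S. i \<noteq> j \<longrightarrow> E i j)"

definition ramsey_prop :: "nat \<Rightarrow> nat \<Rightarrow> nat \<Rightarrow> bool" where
  "ramsey_prop s t N \<longleftrightarrow> (\<forall>m\<ge>N. \<forall>E. simple_graph m E \<longrightarrow>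
      (\<exists>S. independent_set m E S \<and> card S = s) \<or> (\<exists>S. clique m E S \<and> card S = t))"

definition ramsey_number :: "nat \<Rightarrow> nat \<Rightarrow> nat" where
  "ramsey_number s t = (LEAST N. ramsey_prop s t N)"

end

theory Submission
  imports Defs "HOL-Library.Ramsey"
begin

(* Let A be the adjacency matrix of a graph G on m vertices.  If the quadratic
   form x^T A x is nonpositive on a subspace of codimension c, then A has at least
   m - c nonpositive eigenvalues: otherwise that subspace would meet the span of the
   eigenvectors with positive eigenvalues in a nonzero vector, on which the form is positive.
   A graph on at least R(k, k+1) vertices contains an independent set S with |S| = k or a
   clique S with |S| = k + 1.  In the first case the form vanishes on the vectors supported
   on S (codimension m - k); in the second case it equals -|x|^2 on the vectors supported
   on S with coordinate sum 0 (codimension m - k).  Either way A has at least k nonpositive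
   eigenvalues, so NPO(k) exists and is at most R(k, k+1).

   Subspaces are described as the vectors orthogonal to a given
   list of vectors, whose length bounds the codimension. *)

text \<open>Fewer than n vectors have a nonzero common orthogonal vector: the square matrix with
  these vectors as rows, padded by zero rows, is singular.\<close>

lemma nonzero_orthogonal_vector:
  fixes rs :: "'a :: field vec list"
  assumes rs: "set rs \<subseteq> carrier_vec n" and len: "length rs < n"
  shows "\<exists>x\<in>carrier_vec n. x \<noteq> 0\<^sub>v n \<and> (\<forall>r\<in>set rs. r \<bullet> x = 0)"
proof -
  define c where "c i = (if i < length rs then rs ! i else 0\<^sub>v n)" for i
  define M where "M = mat\<^sub>r n n (\<lambda>i. if i = n - 1 then 0\<^sub>v n else c i)"
  have c: "c \<in> {0..<n} \<rightarrow> carrier_vec n" using rs nth_mem unfolding c_def by fastforce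
  have M: "M \<in> carrier_mat n n" unfolding M_def by auto
  have "det M = 0" unfolding M_def by (rule det_row_0, insert len c, auto)
  then obtain x where x: "x \<in> carrier_vec n" "x \<noteq> 0\<^sub>v n" "M *\<^sub>v x = 0\<^sub>v n"
    using det_0_iff_vec_prod_zero_field[OF M] by auto
  have "r \<bullet> x = 0" if r: "r \<in> set rs" for r
  proof -
    from r obtain i where i: "i < length rs" "r = rs ! i" by (auto simp: in_set_conv_nth)
    have "rs ! i \<in> carrier_vec n" using rs i(1) nth_mem by blast
    then have "row M i = r" unfolding M_def c_def using i len
      by (subst row_mat_of_row_fun) auto
    moreover have "(M *\<^sub>v x) $ i = 0" using x i len by auto
    ultimately show ?thesis using i len M by auto
  qed
  with x show ?thesis by blast
qed

lemma real_vec_self_scalar_pos: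
  fixes x :: "real vec"
  assumes "x \<in> carrier_vec n" "x \<noteq> 0\<^sub>v n"
  shows "x \<bullet> x > 0"
  using conjugate_square_greater_0_vec[OF assms(1)] assms(2) by simp

definition orthonormal :: "nat \<Rightarrow> real vec list \<Rightarrow> bool" where
  "orthonormal n ws \<longleftrightarrow> set ws \<subseteq> carrier_vec n \<and>
     (\<forall>i<length ws. \<forall>j<length ws. ws ! i \<bullet> ws ! j = (if i = j then 1 else 0))"

lemma orthonormal_set_carrier: "orthonormal n ws \<Longrightarrow> set ws \<subseteq> carrier_vec n"
  unfolding orthonormal_def by blast

lemma orthonormal_carrier: "orthonormal n ws \<Longrightarrow> i < length ws \<Longrightarrow> ws ! i \<in> carrier_vec n"
  unfolding orthonormal_def using nth_mem by blast

lemma orthonormal_Nil: "orthonormal n []"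
  unfolding orthonormal_def by simp

lemma orthonormal_snoc:
  assumes ws: "orthonormal n ws" and u: "u \<in> carrier_vec n" "u \<bullet> u = 1"
    and orth: "\<forall>w\<in>set ws. w \<bullet> u = 0"
  shows "orthonormal n (ws @ [u])"
  unfolding orthonormal_def
proof (intro conjI allI impI)
  show "set (ws @ [u]) \<subseteq> carrier_vec n" using ws u unfolding orthonormal_def by auto
  have wu: "ws ! i \<bullet> u = 0" "u \<bullet> ws ! i = 0" if "i < length ws" for i
    using orth nth_mem[OF that] comm_scalar_prod[OF orthonormal_carrier[OF ws that] u(1)] by auto
  have ww: "ws ! i \<bullet> ws ! j = (if i = j then 1 else 0)" if "i < length ws" "j < length ws" for i j
    using ws that unfolding orthonormal_def by blast
  fix i j assume "i < length (ws @ [u])" "j < length (ws @ [u])"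
  then consider "i < length ws" "j < length ws" | "i < length ws" "j = length ws"
    | "i = length ws" "j < length ws" | "i = length ws" "j = length ws" by fastforce
  then show "(ws @ [u]) ! i \<bullet> (ws @ [u]) ! j = (if i = j then 1 else 0)"
    by cases (simp_all add: nth_append ww wu u(2))
qed

lemma orthonormal_append:
  assumes vw: "orthonormal n (vs @ ws)"
  shows "orthonormal n ws" and "\<And>v w. v \<in> set vs \<Longrightarrow> w \<in> set ws \<Longrightarrow> w \<bullet> v = 0"
proof -
  have entry: "(vs @ ws) ! i \<bullet> (vs @ ws) ! j = (if i = j then 1 else 0)"
    if "i < length vs + length ws" "j < length vs + length ws" for i j
    using vw that unfolding orthonormal_def by simp
  show "orthonormal n ws" unfolding orthonormal_def
  proof (intro conjI allI impI)
    show "set ws \<subseteq> carrier_vec n" using orthonormal_set_carrier[OF vw] by simp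
    fix i j assume "i < length ws" "j < length ws"
    then show "ws ! i \<bullet> ws ! j = (if i = j then 1 else 0)"
      using entry[of "length vs + i" "length vs + j"] by (simp add: nth_append)
  qed
  fix v w assume "v \<in> set vs" "w \<in> set ws"
  then obtain i j where "i < length vs" "v = vs ! i" "j < length ws" "w = ws ! j"
    by (auto simp: in_set_conv_nth)
  then show "w \<bullet> v = 0" using entry[of "length vs + j" i] by (simp add: nth_append)
qed

definition normalise_vec :: "real vec \<Rightarrow> real vec" where
  "normalise_vec x = (1 / sqrt (x \<bullet> x)) \<cdot>\<^sub>v x"

lemma normalise_vec:
  assumes x: "x \<in> carrier_vec n" "x \<noteq> 0\<^sub>v n"
  shows "normalise_vec x \<in> carrier_vec n" and "normalise_vec x \<bullet> normalise_vec x = 1"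
  using x real_vec_self_scalar_pos[OF x]
  by (auto simp: normalise_vec_def real_sqrt_mult[symmetric])

lemma orthonormal_snoc_normalise:
  assumes ws: "orthonormal n ws" and x: "x \<in> carrier_vec n" "x \<noteq> 0\<^sub>v n"
    and orth: "\<forall>w\<in>set ws. w \<bullet> x = 0"
  shows "orthonormal n (ws @ [normalise_vec x])"
proof (rule orthonormal_snoc[OF ws normalise_vec[OF x]], intro ballI)
  fix w assume w: "w \<in> set ws"
  then have "w \<in> carrier_vec n" using ws unfolding orthonormal_def by blast
  then show "w \<bullet> normalise_vec x = 0"
    unfolding normalise_vec_def using orth w x by simp
qed

lemma orthonormal_extend:
  assumes ws: "orthonormal n ws" and len: "length ws < n"
  shows "\<exists>u. orthonormal n (ws @ [u])"
proof -
  obtain x where "x \<in> carrier_vec n" "x \<noteq> 0\<^sub>v n" "\<forall>w\<in>set ws. w \<bullet> x = 0"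
    using nonzero_orthogonal_vector[OF orthonormal_set_carrier[OF ws] len] by blast
  then show ?thesis using orthonormal_snoc_normalise[OF ws] by blast
qed

text \<open>With P
  trivial this is the basis completion; with P = "is an eigenvector" it is the core of the
  spectral theorem.\<close>

lemma orthonormal_complete_with:
  assumes step: "\<And>ws. orthonormal n ws \<Longrightarrow> set ws \<subseteq> Collect P \<Longrightarrow> length ws < n \<Longrightarrow>
      \<exists>u. P u \<and> orthonormal n (ws @ [u])"
    and ws: "orthonormal n ws" "set ws \<subseteq> Collect P" "length ws \<le> n"
  shows "\<exists>us. orthonormal n (ws @ us) \<and> set us \<subseteq> Collect P \<and> length (ws @ us) = n"
  using ws
proof (induction "n - length ws" arbitrary: ws)
  case 0 thus ?case by (intro exI[of _ "[]"]) auto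
next
  case (Suc d)
  have "length ws < n" using Suc.hyps(2) by linarith
  with step Suc.prems obtain u where u: "P u" "orthonormal n (ws @ [u])" by blast
  have "d = n - length (ws @ [u])" "set (ws @ [u]) \<subseteq> Collect P" "length (ws @ [u]) \<le> n"
    using Suc.hyps(2) Suc.prems(2) u(1) \<open>length ws < n\<close> by auto
  from Suc.hyps(1)[OF this(1) u(2) this(2,3)] obtain us where
    "orthonormal n (ws @ [u] @ us)" "set us \<subseteq> Collect P" "length (ws @ [u] @ us) = n" by auto
  then show ?case using u(1) by (intro exI[of _ "u # us"]) auto
qed

lemma mat_of_cols_transpose_mult_vec:
  assumes ws: "set ws \<subseteq> carrier_vec n" and x: "x \<in> carrier_vec n"
  shows "(mat_of_cols n ws)\<^sup>T *\<^sub>v x = vec (length ws) (\<lambda>i. ws ! i \<bullet> x)"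
proof (rule eq_vecI)
  fix i assume "i < dim_vec (vec (length ws) (\<lambda>i. ws ! i \<bullet> x))"
  then have i: "i < length ws" by simp
  then have "ws ! i \<in> carrier_vec n" using ws nth_mem by blast
  with i x show "((mat_of_cols n ws)\<^sup>T *\<^sub>v x) $ i = vec (length ws) (\<lambda>i. ws ! i \<bullet> x) $ i"
    unfolding transpose_mat_of_cols by simp
qed (simp add: transpose_mat_of_cols)

lemma mat_of_cols_mult_vec_orthogonal:
  fixes ws :: "'a :: comm_ring_1 vec list"
  assumes ws: "set ws \<subseteq> carrier_vec n" and v: "v \<in> carrier_vec n"
    and orth: "\<forall>w\<in>set ws. w \<bullet> v = 0" and y: "y \<in> carrier_vec (length ws)"
  shows "v \<bullet> (mat_of_cols n ws *\<^sub>v y) = 0"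
proof -
  have Q: "mat_of_cols n ws \<in> carrier_mat n (length ws)" by simp
  have "(mat_of_cols n ws)\<^sup>T *\<^sub>v v = 0\<^sub>v (length ws)"
    unfolding mat_of_cols_transpose_mult_vec[OF ws v] using orth nth_mem by auto
  then show ?thesis using transpose_vec_mult_scalar[OF Q y v] y by simp
qed

lemma orthonormal_gram:
  assumes ws: "orthonormal n ws"
  shows "(mat_of_cols n ws)\<^sup>T * mat_of_cols n ws = 1\<^sub>m (length ws)"
proof (rule eq_matI)
  fix i j assume "i < dim_row (1\<^sub>m (length ws))" "j < dim_col (1\<^sub>m (length ws))"
  then have ij: "i < length ws" "j < length ws" by auto
  then have "((mat_of_cols n ws)\<^sup>T * mat_of_cols n ws) $$ (i, j) = ws ! i \<bullet> ws ! j"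
    using orthonormal_carrier[OF ws] unfolding transpose_mat_of_cols by simp
  with ws ij show "((mat_of_cols n ws)\<^sup>T * mat_of_cols n ws) $$ (i, j) = 1\<^sub>m (length ws) $$ (i, j)"
    unfolding orthonormal_def by simp
qed auto

lemma orthonormal_square_inverse:
  assumes ws: "orthonormal n ws" and len: "length ws = n"
  shows "mat_of_cols n ws * (mat_of_cols n ws)\<^sup>T = 1\<^sub>m n"
  using mat_mult_left_right_inverse[OF _ _ orthonormal_gram[OF ws]] len by auto

lemma orthonormal_basis_coordinates_eq:
  assumes ws: "orthonormal n ws" and len: "length ws = n"
    and a: "a \<in> carrier_vec n" and b: "b \<in> carrier_vec n"
    and coord: "\<And>w. w \<in> set ws \<Longrightarrow> w \<bullet> a = w \<bullet> b"
  shows "a = b"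
proof -
  define P where "P = mat_of_cols n ws"
  have P: "P \<in> carrier_mat n n" unfolding P_def using len by auto
  have "P\<^sup>T *\<^sub>v a = P\<^sup>T *\<^sub>v b"
    unfolding P_def mat_of_cols_transpose_mult_vec[OF orthonormal_set_carrier[OF ws] a]
      mat_of_cols_transpose_mult_vec[OF orthonormal_set_carrier[OF ws] b]
    using coord nth_mem by auto
  then have "(P * P\<^sup>T) *\<^sub>v a = (P * P\<^sup>T) *\<^sub>v b" using P a b by auto
  then show ?thesis unfolding P_def orthonormal_square_inverse[OF ws len] using a b by simp
qed

text \<open>Real symmetric matrices have real eigenvalues: for a complex eigenvector v with
  eigenvalue a, the Hermitian form of A at v is real and equals a times the (positive)
  squared norm of v.\<close>

lemma real_symmetric_hermitian_form_real:
  fixes A :: "real mat" and v :: "complex vec"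
  assumes A: "A \<in> carrier_mat n n" and sym: "A\<^sup>T = A" and v: "v \<in> carrier_vec n"
  shows "Im (conjugate v \<bullet> (map_mat complex_of_real A *\<^sub>v v)) = 0"
proof -
  define s where "s = conjugate v \<bullet> (map_mat complex_of_real A *\<^sub>v v)"
  have symi: "A $$ (i,j) = A $$ (j,i)" if "i < n" "j < n" for i j
    using arg_cong[OF sym, of "\<lambda>M. M $$ (i,j)"] that A by auto
  have s: "s = (\<Sum>i<n. \<Sum>j<n. cnj (v $ i) * of_real (A $$ (i,j)) * v $ j)"
    unfolding s_def using v A
    by (auto simp: mult_mat_vec_def scalar_prod_def row_def sum_distrib_left atLeast0LessThan
        mult.assoc intro!: sum.cong)
  have "cnj s = (\<Sum>i<n. \<Sum>j<n. v $ i * of_real (A $$ (i,j)) * cnj (v $ j))"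
    unfolding s cnj_sum by simp
  also have "\<dots> = (\<Sum>j<n. \<Sum>i<n. v $ i * of_real (A $$ (i,j)) * cnj (v $ j))"
    by (rule sum.swap)
  also have "\<dots> = s" unfolding s
    by (intro sum.cong refl) (auto simp: symi)
  finally show ?thesis unfolding s_def[symmetric] by (metis cnj.sel(2) neg_equal_zero)
qed

text \<open>Hence the characteristic polynomial of a real symmetric matrix, which has a complex root
  by the fundamental theorem of algebra, has a real root.\<close>

lemma real_symmetric_has_eigenvalue:
  fixes A :: "real mat"
  assumes A: "A \<in> carrier_mat n n" and sym: "A\<^sup>T = A" and n: "n > 0"
  shows "\<exists>e. eigenvalue A e"
proof -
  define Ac where "Ac = map_mat complex_of_real A"
  have Ac: "Ac \<in> carrier_mat n n" unfolding Ac_def using A by auto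
  have cp: "char_poly Ac = map_poly of_real (char_poly A)"
    unfolding Ac_def by (rule of_real_hom.char_poly_hom[OF A])
  have "degree (char_poly Ac) = n" using degree_monic_char_poly[OF Ac] by auto
  then have "\<not> constant (poly (char_poly Ac))" using n by (simp add: constant_degree)
  from fundamental_theorem_of_algebra[OF this] obtain a where "poly (char_poly Ac) a = 0" by auto
  then have "eigenvalue Ac a" using eigenvalue_root_char_poly[OF Ac] by auto
  then obtain v where v: "v \<in> carrier_vec n" "v \<noteq> 0\<^sub>v n" "Ac *\<^sub>v v = a \<cdot>\<^sub>v v"
    unfolding eigenvalue_def eigenvector_def using Ac by auto
  define r where "r = v \<bullet>c v"
  have "r > 0" unfolding r_def using v by simp
  then have r: "Im r = 0" "Re r > 0" by (auto simp: less_complex_def)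
  have "conjugate v \<bullet> (Ac *\<^sub>v v) = a * r"
    unfolding v(3) r_def using v(1) comm_scalar_prod[of v n "conjugate v"] by simp
  with real_symmetric_hermitian_form_real[OF A sym v(1)] r have "Im a = 0"
    unfolding Ac_def by simp
  then have "a = of_real (Re a)" by (simp add: complex_eq_iff)
  with \<open>poly (char_poly Ac) a = 0\<close> have "poly (char_poly A) (Re a) = 0"
    unfolding cp by (metis of_real_eq_0_iff of_real_hom.poly_map_poly)
  then show ?thesis using eigenvalue_root_char_poly[OF A] by auto
qed

lemma compression_symmetric:
  fixes A :: "'a :: comm_ring_1 mat"
  assumes A: "A \<in> carrier_mat n n" and sym: "A\<^sup>T = A" and Q: "Q \<in> carrier_mat n m"
  shows "(Q\<^sup>T * A * Q)\<^sup>T = Q\<^sup>T * A * Q"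
proof -
  have QTA: "Q\<^sup>T * A \<in> carrier_mat m n" using A Q by auto
  have "(Q\<^sup>T * A * Q)\<^sup>T = Q\<^sup>T * (Q\<^sup>T * A)\<^sup>T" by (rule transpose_mult[OF QTA Q])
  also have "(Q\<^sup>T * A)\<^sup>T = A * Q" using transpose_mult[of "Q\<^sup>T" m n A n] A Q by (simp add: sym)
  also have "Q\<^sup>T * (A * Q) = Q\<^sup>T * A * Q" using A Q by simp
  finally show ?thesis .
qed

text \<open>Let vs be orthonormal eigenvectors of a symmetric matrix A, completed by ws to an
  orthonormal basis, and let Q have the columns ws.  Eigenvectors y of the compression
  Q^T A Q lift to eigenvectors Q y of A orthogonal to vs: the coordinates of A (Q y) and
  of f (Q y) agree against vs by symmetry of A, and against ws by the eigen-equation for y.\<close>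

lemma compressed_eigenvector_lifts:
  fixes A :: "real mat"
  assumes A: "A \<in> carrier_mat n n" and sym: "A\<^sup>T = A"
    and vws: "orthonormal n (vs @ ws)" and len: "length (vs @ ws) = n"
    and eig: "\<forall>v\<in>set vs. \<exists>e. A *\<^sub>v v = e \<cdot>\<^sub>v v"
    and y: "y \<in> carrier_vec (length ws)"
    and y_eig: "(mat_of_cols n ws)\<^sup>T * A * mat_of_cols n ws *\<^sub>v y = f \<cdot>\<^sub>v y"
  defines "x \<equiv> mat_of_cols n ws *\<^sub>v y"
  shows "A *\<^sub>v x = f \<cdot>\<^sub>v x" and "\<forall>v\<in>set vs. v \<bullet> x = 0"
proof -
  define m where "m = length ws"
  define Q where "Q = mat_of_cols n ws"
  have ws: "orthonormal n ws" and ws_vs: "\<And>v w. v \<in> set vs \<Longrightarrow> w \<in> set ws \<Longrightarrow> w \<bullet> v = 0"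
    using orthonormal_append[OF vws] by auto
  have Q: "Q \<in> carrier_mat n m" unfolding Q_def m_def by auto
  have y': "y \<in> carrier_vec m" using y unfolding m_def .
  have QT: "Q\<^sup>T *\<^sub>v z = vec m (\<lambda>j. ws ! j \<bullet> z)" if "z \<in> carrier_vec n" for z
    unfolding Q_def m_def by (rule mat_of_cols_transpose_mult_vec[OF orthonormal_set_carrier[OF ws] that])
  have x: "x \<in> carrier_vec n" unfolding x_def Q_def[symmetric] using Q y' by auto
  have QTx: "Q\<^sup>T *\<^sub>v x = y" unfolding x_def Q_def[symmetric] using Q y'
    by (simp add: assoc_mult_mat_vec[symmetric, of _ m n _ m] Q_def m_def orthonormal_gram[OF ws])
  show vx: "\<forall>v\<in>set vs. v \<bullet> x = 0"
    unfolding x_def using mat_of_cols_mult_vec_orthogonal[OF orthonormal_set_carrier[OF ws] _ _ y]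
      orthonormal_set_carrier[OF vws] ws_vs by auto
  have Ax: "A *\<^sub>v x \<in> carrier_vec n" and fx: "f \<cdot>\<^sub>v x \<in> carrier_vec n" using A x by auto
  show "A *\<^sub>v x = f \<cdot>\<^sub>v x"
  proof (rule orthonormal_basis_coordinates_eq[OF vws len Ax fx])
    fix w assume "w \<in> set (vs @ ws)"
    then consider (eigen) "w \<in> set vs" | (compl) j where "j < m" "w = ws ! j"
      by (auto simp: m_def in_set_conv_nth)
    then show "w \<bullet> (A *\<^sub>v x) = w \<bullet> (f \<cdot>\<^sub>v x)"
    proof cases
      case eigen
      then obtain e where e: "A *\<^sub>v w = e \<cdot>\<^sub>v w" using eig by blast
      have w: "w \<in> carrier_vec n" using eigen orthonormal_set_carrier[OF vws] by auto
      have "w \<bullet> (A *\<^sub>v x) = (A\<^sup>T *\<^sub>v w) \<bullet> x" using transpose_vec_mult_scalar[OF A x w] by simp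
      also have "\<dots> = e * (w \<bullet> x)" unfolding sym e using w x by simp
      finally show ?thesis using vx eigen w x by simp
    next
      case compl
      have "Q\<^sup>T *\<^sub>v (A *\<^sub>v x) = f \<cdot>\<^sub>v y" unfolding x_def Q_def[symmetric] using Q A y' y_eig
        by (simp add: assoc_mult_mat_vec[symmetric, of _ m n _ n]
            assoc_mult_mat_vec[symmetric, of _ m n _ m] Q_def)
      moreover have "Q\<^sup>T *\<^sub>v (f \<cdot>\<^sub>v x) = f \<cdot>\<^sub>v y"
        using mult_mat_vec[of "Q\<^sup>T" m n x f] Q x QTx by simp
      ultimately show ?thesis
        using QT[OF Ax] QT[OF fx] compl by (metis index_vec)
    qed
  qed
qed

text \<open>The induction step of the spectral theorem: a symmetric matrix has an eigenvector
  orthogonal to any orthonormal list of fewer than n eigenvectors.\<close>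

lemma symmetric_eigenvector_orthogonal_to:
  fixes A :: "real mat"
  assumes A: "A \<in> carrier_mat n n" and sym: "A\<^sup>T = A"
    and vs: "orthonormal n vs" "length vs < n"
    and eig: "\<forall>v\<in>set vs. \<exists>e. A *\<^sub>v v = e \<cdot>\<^sub>v v"
  shows "\<exists>x. x \<in> carrier_vec n \<and> x \<noteq> 0\<^sub>v n \<and> (\<exists>f. A *\<^sub>v x = f \<cdot>\<^sub>v x) \<and> (\<forall>v\<in>set vs. v \<bullet> x = 0)"
proof -
  obtain ws where vws: "orthonormal n (vs @ ws)" and len: "length (vs @ ws) = n"
    using orthonormal_complete_with[of n "\<lambda>_. True" vs] orthonormal_extend vs by auto
  define m where "m = length ws"
  define Q where "Q = mat_of_cols n ws"
  have ws: "orthonormal n ws" using orthonormal_append(1)[OF vws] .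
  have Q: "Q \<in> carrier_mat n m" unfolding Q_def m_def by auto
  have B: "Q\<^sup>T * A * Q \<in> carrier_mat m m" using A Q by auto
  have "m > 0" using vs(2) len unfolding m_def length_append by linarith
  then obtain f y where y: "y \<in> carrier_vec m" "y \<noteq> 0\<^sub>v m" "Q\<^sup>T * A * Q *\<^sub>v y = f \<cdot>\<^sub>v y"
    using real_symmetric_has_eigenvalue[OF B compression_symmetric[OF A sym Q]] B
    unfolding eigenvalue_def eigenvector_def by blast
  define x where "x = Q *\<^sub>v y"
  have "Q\<^sup>T *\<^sub>v x = y" unfolding x_def using Q y
    by (simp add: assoc_mult_mat_vec[symmetric, of _ m n _ m] Q_def m_def orthonormal_gram[OF ws])
  then have "x \<noteq> 0\<^sub>v n" using y(2) Q by auto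
  moreover have "x \<in> carrier_vec n" unfolding x_def using Q y by auto
  moreover note compressed_eigenvector_lifts[OF A sym vws len eig, of y f]
  ultimately show ?thesis using y unfolding x_def Q_def m_def by blast
qed

definition orthonormal_eigenbasis :: "nat \<Rightarrow> real mat \<Rightarrow> real vec list \<Rightarrow> real list \<Rightarrow> bool" where
  "orthonormal_eigenbasis n A vs es \<longleftrightarrow> orthonormal n vs \<and> length vs = n \<and> length es = n \<and>
     (\<forall>i<n. A *\<^sub>v (vs ! i) = (es ! i) \<cdot>\<^sub>v (vs ! i))"

theorem real_spectral_theorem:
  fixes A :: "real mat"
  assumes A: "A \<in> carrier_mat n n" and sym: "A\<^sup>T = A"
  shows "\<exists>vs es. orthonormal_eigenbasis n A vs es"
proof -
  let ?eigen = "\<lambda>v. \<exists>e. A *\<^sub>v v = e \<cdot>\<^sub>v v"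
  have "\<exists>u. ?eigen u \<and> orthonormal n (vs @ [u])"
    if vs: "orthonormal n vs" "set vs \<subseteq> Collect ?eigen" "length vs < n" for vs
  proof -
    obtain x where x: "x \<in> carrier_vec n" "x \<noteq> 0\<^sub>v n" "?eigen x" "\<forall>v\<in>set vs. v \<bullet> x = 0"
      using symmetric_eigenvector_orthogonal_to[OF A sym vs(1,3)] vs(2) by auto
    then have "?eigen (normalise_vec x)"
      unfolding normalise_vec_def using A by (auto simp: mult_mat_vec[OF A] smult_smult_assoc mult.commute)
    with orthonormal_snoc_normalise[OF vs(1) x(1,2,4)] show ?thesis by blast
  qed
  from orthonormal_complete_with[of n ?eigen, OF this orthonormal_Nil]
  obtain vs where vs: "orthonormal n vs" "length vs = n" "\<forall>v\<in>set vs. ?eigen v"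
    by auto
  define es where "es = map (\<lambda>v. SOME e. A *\<^sub>v v = e \<cdot>\<^sub>v v) vs"
  have "A *\<^sub>v (vs ! i) = (es ! i) \<cdot>\<^sub>v (vs ! i)" if "i < n" for i
    using vs(2,3) that nth_mem[of i vs] unfolding es_def by (auto intro: someI_ex)
  with vs have "orthonormal_eigenbasis n A vs es"
    unfolding orthonormal_eigenbasis_def es_def by simp
  then show ?thesis by blast
qed

lemma eigenbasis_diagonalises:
  fixes A :: "real mat"
  assumes A: "A \<in> carrier_mat n n" and eb: "orthonormal_eigenbasis n A vs es"
  shows "A * mat_of_cols n vs = mat_of_cols n vs * mat_diag n (\<lambda>i. es ! i)"
proof -
  have vs: "orthonormal n vs" "length vs = n"
    and eig: "\<And>i. i < n \<Longrightarrow> A *\<^sub>v (vs ! i) = (es ! i) \<cdot>\<^sub>v (vs ! i)"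
    using eb unfolding orthonormal_eigenbasis_def by auto
  show ?thesis
  proof (rule eq_matI)
    fix r i assume "r < dim_row (mat_of_cols n vs * mat_diag n (\<lambda>i. es ! i))"
      "i < dim_col (mat_of_cols n vs * mat_diag n (\<lambda>i. es ! i))"
    then have ri: "r < n" "i < n" by (auto simp: mat_diag_def)
    have "(A * mat_of_cols n vs) $$ (r, i) = (A *\<^sub>v vs ! i) $ r"
      using A ri vs(2) orthonormal_carrier[OF vs(1)] by simp
    also have "\<dots> = vs ! i $ r * es ! i"
      using eig[OF ri(2)] ri orthonormal_carrier[OF vs(1), of i] vs(2) by (simp add: mult.commute)
    finally show "(A * mat_of_cols n vs) $$ (r, i) = (mat_of_cols n vs * mat_diag n (\<lambda>i. es ! i)) $$ (r, i)"
      using ri vs(2) by (subst mat_diag_mult_right[of _ n n]) (auto simp: mat_of_cols_index)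
  qed (use A vs(2) in \<open>auto simp: mat_diag_def\<close>)
qed

lemma eigenbasis_char_poly:
  fixes A :: "real mat"
  assumes A: "A \<in> carrier_mat n n" and eb: "orthonormal_eigenbasis n A vs es"
  shows "char_poly A = (\<Prod>e\<leftarrow>es. [:- e, 1:])"
proof -
  define P where "P = mat_of_cols n vs"
  define D where "D = mat_diag n (\<lambda>i. es ! i)"
  have vs: "orthonormal n vs" "length vs = n" and les: "length es = n"
    using eb unfolding orthonormal_eigenbasis_def by auto
  have P: "P \<in> carrier_mat n n" and D: "D \<in> carrier_mat n n" unfolding P_def D_def using vs by auto
  have "A = (A * P) * P\<^sup>T" unfolding P_def using A P_def P orthonormal_square_inverse[OF vs] by simp
  also have "\<dots> = P * D * P\<^sup>T" unfolding P_def D_def eigenbasis_diagonalises[OF A eb] ..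
  finally have "similar_mat_wit A D P P\<^sup>T"
    unfolding similar_mat_wit_def Let_def P_def
    using A P D orthonormal_square_inverse[OF vs] orthonormal_gram[OF vs(1)] vs(2) by (auto simp: P_def)
  then have "char_poly A = char_poly D" by (intro char_poly_similar) (auto simp: similar_mat_def)
  also have "\<dots> = (\<Prod>a\<leftarrow>diag_mat D. [:- a, 1:])"
    by (rule char_poly_upper_triangular[OF D]) (auto simp: upper_triangular_def D_def mat_diag_def)
  also have "diag_mat D = es" unfolding diag_mat_def D_def mat_diag_def using les
    by (auto intro: nth_equalityI)
  finally show ?thesis .
qed

lemma order_prod_linear:
  "order (a :: real) (\<Prod>e\<leftarrow>es. [:- e, 1:]) = count_list es a"
proof (induction es)
  case Nil thus ?case by (simp add: order_0I)
next
  case (Cons x xs)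
  have "(\<Prod>e\<leftarrow>xs. [:- e, 1:]) \<noteq> (0 :: real poly)" by auto
  then have "[:- x, 1:] * (\<Prod>e\<leftarrow>xs. [:- e, 1:]) \<noteq> 0" by (intro no_zero_divisors) simp_all
  then have "order a (\<Prod>e\<leftarrow>x # xs. [:- e, 1:]) = order a [:- x, 1:] + order a (\<Prod>e\<leftarrow>xs. [:- e, 1:])"
    by (simp add: order_mult del: mult_pCons_left)
  also have "order a [:- x, 1:] = (if x = a then 1 else 0)"
    using order_power_n_n[of a 1] by (auto intro: order_0I)
  finally show ?case using Cons by simp
qed

lemma sum_count_list:
  assumes "finite T" "set xs \<subseteq> T"
  shows "(\<Sum>a\<in>{a\<in>T. P a}. count_list xs a) = length (filter P xs)"
  using assms(2)
proof (induction xs)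
  case Nil thus ?case by simp
next
  case (Cons x xs)
  have "(\<Sum>a\<in>{a\<in>T. P a}. count_list (x # xs) a) =
        (\<Sum>a\<in>{a\<in>T. P a}. if x = a then 1 else 0) + (\<Sum>a\<in>{a\<in>T. P a}. count_list xs a)"
    by (simp add: sum.distrib[symmetric]) (intro sum.cong; simp)
  also have "(\<Sum>a\<in>{a\<in>T. P a}. if x = a then 1 else 0) = (if P x then 1 else (0::nat))"
    using Cons.prems assms(1) by simp
  finally show ?case using Cons by simp
qed

lemma num_nonpos_eigenvalues_split:
  fixes A :: "real mat"
  assumes A: "A \<in> carrier_mat n n" and cp: "char_poly A = (\<Prod>e\<leftarrow>es. [:- e, 1:])"
  shows "num_nonpos_eigenvalues A = length (filter (\<lambda>e. e \<le> 0) es)"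
proof -
  have "(\<Prod>e\<leftarrow>es. [:- e, 1:]) \<noteq> (0 :: real poly)" by auto
  then have "eigenvalue A a \<longleftrightarrow> a \<in> set es" for a
    unfolding eigenvalue_root_char_poly[OF A] cp order_root
    by (simp add: order_prod_linear count_list_0_iff)
  then have "{a. eigenvalue A a \<and> a \<le> 0} = {a\<in>set es. a \<le> 0}" by auto
  then show ?thesis unfolding num_nonpos_eigenvalues_def cp order_prod_linear
    by (simp add: sum_count_list)
qed

lemma mat_diag_mult_vec:
  assumes "v \<in> carrier_vec n"
  shows "mat_diag n f *\<^sub>v v = vec n (\<lambda>i. f i * v $ i)"
proof (rule eq_vecI)
  fix i assume "i < dim_vec (vec n (\<lambda>i. f i * v $ i))"
  then have "i < n" by simp
  with assms have "(mat_diag n f *\<^sub>v v) $ i = (\<Sum>j\<in>{0..<n}. (if i = j then f j else 0) * v $ j)"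
    by (simp add: mat_diag_def scalar_prod_def)
  also have "\<dots> = (\<Sum>j\<in>{0..<n}. if i = j then f i * v $ i else 0)"
    by (rule sum.cong) auto
  finally show "(mat_diag n f *\<^sub>v v) $ i = vec n (\<lambda>i. f i * v $ i) $ i"
    using \<open>i < n\<close> by simp
qed (simp add: mat_diag_def)

lemma eigenbasis_quadratic_form:
  fixes A :: "real mat"
  assumes A: "A \<in> carrier_mat n n" and eb: "orthonormal_eigenbasis n A vs es"
    and x: "x \<in> carrier_vec n"
  shows "x \<bullet> (A *\<^sub>v x) = (\<Sum>i<n. es ! i * (vs ! i \<bullet> x)\<^sup>2)"
proof -
  have vs: "orthonormal n vs" "length vs = n"
    using eb unfolding orthonormal_eigenbasis_def by auto
  define P where "P = mat_of_cols n vs"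
  define D where "D = mat_diag n (\<lambda>i. es ! i)"
  define y where "y = P\<^sup>T *\<^sub>v x"
  have P: "P \<in> carrier_mat n n" unfolding P_def using vs by auto
  have y: "y \<in> carrier_vec n" unfolding y_def using P x by auto
  have y_coord: "y = vec n (\<lambda>i. vs ! i \<bullet> x)"
    unfolding y_def P_def using mat_of_cols_transpose_mult_vec[OF orthonormal_set_carrier[OF vs(1)] x] vs(2)
    by simp
  have xy: "x = P *\<^sub>v y" unfolding y_def using P x
    by (simp add: assoc_mult_mat_vec[symmetric, of _ n n _ n] P_def orthonormal_square_inverse[OF vs])
  have Dy: "D *\<^sub>v y \<in> carrier_vec n" unfolding D_def by (rule mult_mat_vec_carrier[OF mat_diag_dim y])
  have "A *\<^sub>v x = P *\<^sub>v (D *\<^sub>v y)" unfolding xy using A P y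
    by (simp add: assoc_mult_mat_vec[symmetric, of _ n n _ n] P_def D_def
        eigenbasis_diagonalises[OF A eb])
  then have "x \<bullet> (A *\<^sub>v x) = (P\<^sup>T *\<^sub>v x) \<bullet> (D *\<^sub>v y)"
    using transpose_vec_mult_scalar[OF P Dy x] by simp
  also have "\<dots> = y \<bullet> vec n (\<lambda>i. es ! i * y $ i)"
    unfolding y_def[symmetric] D_def by (rule arg_cong[OF mat_diag_mult_vec[OF y]])
  also have "\<dots> = (\<Sum>i<n. es ! i * (vs ! i \<bullet> x)\<^sup>2)"
    unfolding y_coord by (simp add: scalar_prod_def atLeast0LessThan power2_eq_square mult_ac)
  finally show ?thesis .
qed

lemma eigenbasis_form_positive:
  fixes A :: "real mat"
  assumes A: "A \<in> carrier_mat n n" and eb: "orthonormal_eigenbasis n A vs es"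
    and x: "x \<in> carrier_vec n" "x \<noteq> 0\<^sub>v n"
    and orth: "\<And>i. i < n \<Longrightarrow> es ! i \<le> 0 \<Longrightarrow> vs ! i \<bullet> x = 0"
  shows "x \<bullet> (A *\<^sub>v x) > 0"
proof -
  have vs: "orthonormal n vs" "length vs = n"
    using eb unfolding orthonormal_eigenbasis_def by auto
  have "\<exists>w\<in>set vs. w \<bullet> x \<noteq> w \<bullet> 0\<^sub>v n"
    using orthonormal_basis_coordinates_eq[OF vs x(1) zero_carrier_vec] x(2) by blast
  then obtain i where i: "i < n" "vs ! i \<bullet> x \<noteq> vs ! i \<bullet> 0\<^sub>v n"
    using vs(2) by (auto simp: in_set_conv_nth)
  then have "vs ! i \<bullet> x \<noteq> 0" using orthonormal_carrier[OF vs(1), of i] vs(2) by simp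
  with i(1) have "es ! i > 0" using orth by force
  have "(\<Sum>j<n. es ! j * (vs ! j \<bullet> x)\<^sup>2) > 0"
  proof (rule sum_pos2[of _ i])
    show "0 < es ! i * (vs ! i \<bullet> x)\<^sup>2" using \<open>es ! i > 0\<close> \<open>vs ! i \<bullet> x \<noteq> 0\<close> by simp
    show "0 \<le> es ! j * (vs ! j \<bullet> x)\<^sup>2" if "j \<in> {..<n}" for j
      using orth[of j] that by (cases "es ! j \<le> 0") auto
  qed (use i in auto)
  then show ?thesis using eigenbasis_quadratic_form[OF A eb x(1)] by simp
qed

text \<open>The eigenvalue bound: if the quadratic form of a symmetric matrix is nonpositive on
  the orthogonal complement of rs, then at most length rs eigenvalues are positive.
  Otherwise the complement of rs and of the eigenvectors with nonpositive eigenvalues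
  contains a nonzero vector, on which the form is positive.\<close>

theorem nonpos_eigenvalues_lower_bound:
  fixes A :: "real mat"
  assumes A: "A \<in> carrier_mat n n" and sym: "A\<^sup>T = A"
    and rs: "set rs \<subseteq> carrier_vec n"
    and nonpos: "\<And>x. x \<in> carrier_vec n \<Longrightarrow> \<forall>r\<in>set rs. r \<bullet> x = 0 \<Longrightarrow> x \<bullet> (A *\<^sub>v x) \<le> 0"
  shows "n \<le> length rs + num_nonpos_eigenvalues A"
proof (rule ccontr)
  assume contra: "\<not> ?thesis"
  obtain vs es where eb: "orthonormal_eigenbasis n A vs es"
    using real_spectral_theorem[OF A sym] by blast
  then have vs: "orthonormal n vs" "length vs = n" and les: "length es = n"
    unfolding orthonormal_eigenbasis_def by auto
  define J where "J = filter (\<lambda>i. es ! i \<le> 0) [0..<n]"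
  have "filter (\<lambda>e. e \<le> 0) es = filter (\<lambda>e. e \<le> 0) (map (nth es) [0..<n])"
    using map_nth[of es] les by simp
  also have "\<dots> = map (nth es) J" unfolding J_def filter_map comp_def ..
  finally have "num_nonpos_eigenvalues A = length J"
    unfolding num_nonpos_eigenvalues_split[OF A eigenbasis_char_poly[OF A eb]] by simp
  define cs where "cs = rs @ map (\<lambda>i. vs ! i) J"
  have "set cs \<subseteq> carrier_vec n"
    unfolding cs_def J_def using rs orthonormal_carrier[OF vs(1)] vs(2) by auto
  moreover have "length cs < n"
    unfolding cs_def using contra \<open>num_nonpos_eigenvalues A = length J\<close> by simp
  ultimately obtain x where x: "x \<in> carrier_vec n" "x \<noteq> 0\<^sub>v n" and xo: "\<forall>c\<in>set cs. c \<bullet> x = 0"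
    using nonzero_orthogonal_vector by blast
  have "x \<bullet> (A *\<^sub>v x) > 0"
  proof (rule eigenbasis_form_positive[OF A eb x])
    fix i assume "i < n" "es ! i \<le> 0"
    then have "vs ! i \<in> set cs" unfolding cs_def J_def by auto
    with xo show "vs ! i \<bullet> x = 0" by blast
  qed
  moreover have "x \<bullet> (A *\<^sub>v x) \<le> 0" using nonpos[OF x(1)] xo unfolding cs_def by simp
  ultimately show False by simp
qed

lemma adj_matrix_carrier: "adj_matrix m E \<in> carrier_mat m m"
  unfolding adj_matrix_def by simp

lemma adj_matrix_symmetric:
  assumes "simple_graph m E"
  shows "(adj_matrix m E)\<^sup>T = adj_matrix m E"
  using assms unfolding adj_matrix_def simple_graph_def by (intro eq_matI) auto

lemma adj_matrix_quadratic_form: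
  assumes x: "x \<in> carrier_vec m"
  shows "x \<bullet> (adj_matrix m E *\<^sub>v x) = (\<Sum>i<m. \<Sum>j<m. if E i j then x $ i * x $ j else 0)"
  using x by (auto simp: adj_matrix_def scalar_prod_def mult_mat_vec_def sum_distrib_left
      atLeast0LessThan intro!: sum.cong)

definition outside_coords :: "nat \<Rightarrow> nat set \<Rightarrow> real vec list" where
  "outside_coords m S = map (unit_vec m) (filter (\<lambda>j. j \<notin> S) [0..<m])"

lemma outside_coords_carrier: "set (outside_coords m S) \<subseteq> carrier_vec m"
  unfolding outside_coords_def by auto

lemma length_outside_coords:
  assumes "S \<subseteq> {0..<m}"
  shows "length (outside_coords m S) = m - card S"
proof -
  have "length (outside_coords m S) = length (filter (\<lambda>j. j \<notin> S) [0..<m])"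
    unfolding outside_coords_def by simp
  also have "\<dots> = card (set (filter (\<lambda>j. j \<notin> S) [0..<m]))"
    by (rule distinct_card[symmetric]) simp
  also have "set (filter (\<lambda>j. j \<notin> S) [0..<m]) = {0..<m} - S" by auto
  also have "card ({0..<m} - S) = m - card S" using assms by (simp add: card_Diff_subset finite_subset)
  finally show ?thesis .
qed

lemma outside_coords_orthogonal:
  assumes "x \<in> carrier_vec m" "\<forall>r\<in>set (outside_coords m S). r \<bullet> x = 0" "j < m" "j \<notin> S"
  shows "x $ j = 0"
proof -
  have "unit_vec m j \<in> set (outside_coords m S)" unfolding outside_coords_def using assms by auto
  then have "unit_vec m j \<bullet> x = 0" using assms(2) by blast
  then show ?thesis using scalar_prod_left_unit[OF assms(1,3)] by simp
qed

text \<open>An independent set S yields |S| nonpositive eigenvalues: the form vanishes on the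
  vectors supported on S.\<close>

lemma independent_set_nonpos_eigenvalues:
  assumes sg: "simple_graph m E" and S: "independent_set m E S"
  shows "card S \<le> num_nonpos_eigenvalues (adj_matrix m E)"
proof -
  have S_sub: "S \<subseteq> {0..<m}" using S unfolding independent_set_def by blast
  have "x \<bullet> (adj_matrix m E *\<^sub>v x) \<le> 0"
    if x: "x \<in> carrier_vec m" "\<forall>r\<in>set (outside_coords m S). r \<bullet> x = 0" for x
  proof -
    have "(if E i j then x $ i * x $ j else 0) = 0" if "i < m" "j < m" for i j
    proof (cases "i \<in> S \<and> j \<in> S")
      case True
      then have "\<not> E i j" using S unfolding independent_set_def by blast
      then show ?thesis by simp
    next
      case False
      then have "x $ i = 0 \<or> x $ j = 0" using outside_coords_orthogonal[OF x] that by blast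
      then show ?thesis by auto
    qed
    then show ?thesis unfolding adj_matrix_quadratic_form[OF x(1)] by simp
  qed
  from nonpos_eigenvalues_lower_bound[OF adj_matrix_carrier adj_matrix_symmetric[OF sg]
      outside_coords_carrier[of m S] this]
  show ?thesis using length_outside_coords[OF S_sub] card_mono[OF _ S_sub] by simp
qed

text \<open>A clique S yields |S| - 1 nonpositive eigenvalues: on the vectors x supported on S with
  coordinate sum 0 the form equals the square of the coordinate sum minus the squared norm,
  i.e. minus the squared norm of x.\<close>

lemma clique_quadratic_form:
  assumes sg: "simple_graph m E" and S: "Defs.clique m E S" and x: "x \<in> carrier_vec m"
    and supp: "\<And>j. j < m \<Longrightarrow> j \<notin> S \<Longrightarrow> x $ j = 0"
  shows "x \<bullet> (adj_matrix m E *\<^sub>v x) = (\<Sum>j<m. x $ j)\<^sup>2 - (\<Sum>j<m. (x $ j)\<^sup>2)"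
proof -
  have entry: "(if E i j then x $ i * x $ j else 0) = x $ i * x $ j - (if i = j then x $ i * x $ j else 0)"
    if "i < m" "j < m" for i j
  proof (cases "i \<in> S \<and> j \<in> S")
    case True
    then have "E i j \<longleftrightarrow> i \<noteq> j" using S sg that unfolding Defs.clique_def simple_graph_def by blast
    then show ?thesis by simp
  next
    case False
    then have "x $ i = 0 \<or> x $ j = 0" using supp that by blast
    then show ?thesis by auto
  qed
  have "x \<bullet> (adj_matrix m E *\<^sub>v x) = (\<Sum>i<m. \<Sum>j<m. x $ i * x $ j - (if i = j then x $ i * x $ j else 0))"
    unfolding adj_matrix_quadratic_form[OF x] by (intro sum.cong refl) (simp add: entry)
  also have "\<dots> = (\<Sum>i<m. x $ i * (\<Sum>j<m. x $ j) - x $ i * x $ i)"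
    by (intro sum.cong refl) (simp add: sum_subtractf sum_distrib_left)
  also have "\<dots> = (\<Sum>j<m. x $ j)\<^sup>2 - (\<Sum>j<m. (x $ j)\<^sup>2)"
    by (simp add: sum_subtractf sum_distrib_right power2_eq_square mult.commute)
  finally show ?thesis .
qed

lemma clique_nonpos_eigenvalues:
  assumes sg: "simple_graph m E" and S: "Defs.clique m E S"
  shows "card S \<le> num_nonpos_eigenvalues (adj_matrix m E) + 1"
proof -
  have S_sub: "S \<subseteq> {0..<m}" using S unfolding Defs.clique_def by blast
  define ind where "ind = vec m (\<lambda>j. if j \<in> S then 1 else 0 :: real)"
  define rs where "rs = outside_coords m S @ [ind]"
  have "x \<bullet> (adj_matrix m E *\<^sub>v x) \<le> 0"
    if x: "x \<in> carrier_vec m" "\<forall>r\<in>set rs. r \<bullet> x = 0" for x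
  proof -
    have "\<forall>r\<in>set (outside_coords m S). r \<bullet> x = 0" using x(2) unfolding rs_def by simp
    note supp = outside_coords_orthogonal[OF x(1) this]
    have "ind \<bullet> x = (\<Sum>j<m. if j \<in> S then x $ j else 0)"
      unfolding ind_def scalar_prod_def using x(1) by (auto simp: atLeast0LessThan intro!: sum.cong)
    also have "\<dots> = (\<Sum>j<m. x $ j)" using supp by (intro sum.cong) auto
    finally have "(\<Sum>j<m. x $ j) = 0" using x(2) unfolding rs_def by simp
    moreover have "0 \<le> (\<Sum>j<m. (x $ j)\<^sup>2)" by (simp add: sum_nonneg)
    ultimately show ?thesis using clique_quadratic_form[OF sg S x(1) supp] by simp
  qed
  moreover have "set rs \<subseteq> carrier_vec m" unfolding rs_def ind_def using outside_coords_carrier by auto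
  ultimately have "m \<le> length rs + num_nonpos_eigenvalues (adj_matrix m E)"
    using nonpos_eigenvalues_lower_bound[OF adj_matrix_carrier adj_matrix_symmetric[OF sg], of rs]
    by simp
  then show ?thesis
    unfolding rs_def using length_outside_coords[OF S_sub] card_mono[OF _ S_sub] by simp
qed

text \<open>Finiteness of the Ramsey numbers, obtained from the library's Ramsey theorem applied to
  the edge set of the graph, viewed as a set of two-element sets.\<close>

definition edge_set :: "(nat \<Rightarrow> nat \<Rightarrow> bool) \<Rightarrow> nat set set" where
  "edge_set E = {{i, j} | i j. E i j}"

lemma edge_set_iff:
  assumes "simple_graph m E" "i < m" "j < m"
  shows "{i, j} \<in> edge_set E \<longleftrightarrow> E i j"
  using assms unfolding edge_set_def simple_graph_def by (auto simp: doubleton_eq_iff)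

lemma clique_of_edge_set:
  assumes sg: "simple_graph m E" and R: "R \<subseteq> {0..<m}" and cl: "Ramsey.clique R (edge_set E)"
  shows "Defs.clique m E R"
  unfolding Defs.clique_def
proof (intro conjI ballI impI)
  fix i j assume ij: "i \<in> R" "j \<in> R" "i \<noteq> j"
  then have m: "i < m" "j < m" using R by auto
  with cl ij show "E i j" using edge_set_iff[OF sg m] unfolding Ramsey.clique_def by blast
qed (rule R)

lemma independent_set_of_edge_set:
  assumes sg: "simple_graph m E" and R: "R \<subseteq> {0..<m}" and ind: "indep R (edge_set E)"
  shows "independent_set m E R"
  unfolding independent_set_def
proof (intro conjI ballI)
  fix i j assume ij: "i \<in> R" "j \<in> R"
  then have m: "i < m" "j < m" using R by auto
  show "\<not> E i j"
  proof (cases "i = j")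
    case True
    then show ?thesis using sg m unfolding simple_graph_def by blast
  next
    case False
    then show ?thesis using ind ij edge_set_iff[OF sg m] unfolding indep_def by blast
  qed
qed (rule R)

lemma ramsey_prop_exists: "\<exists>N. ramsey_prop s t N"
proof -
  obtain N where N: "\<forall>(V::nat set) F. finite V \<and> N \<le> card V \<longrightarrow>
      (\<exists>R\<subseteq>V. card R = t \<and> Ramsey.clique R F \<or> card R = s \<and> indep R F)"
    using ramsey2[of t s] by blast
  have "ramsey_prop s t N" unfolding ramsey_prop_def
  proof (intro allI impI)
    fix m E assume "N \<le> m" and sg: "simple_graph m E"
    then obtain R where R: "R \<subseteq> {0..<m}"
      and "card R = t \<and> Ramsey.clique R (edge_set E) \<or> card R = s \<and> indep R (edge_set E)"
      using N[rule_format, of "{0..<m}" "edge_set E"] by auto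
    then show "(\<exists>S. independent_set m E S \<and> card S = s) \<or> (\<exists>S. Defs.clique m E S \<and> card S = t)"
      using clique_of_edge_set[OF sg R] independent_set_of_edge_set[OF sg R] by blast
  qed
  then show ?thesis by blast
qed

theorem mainTheorem1:
  fixes k :: nat
  assumes "k \<ge> 1"
  shows "(\<exists>n. NPO_prop k n) \<and> NPO k \<le> ramsey_number k (k + 1)"
proof -
  have ramsey: "ramsey_prop k (k + 1) (ramsey_number k (k + 1))"
    unfolding ramsey_number_def by (rule LeastI_ex[OF ramsey_prop_exists])
  have "NPO_prop k (ramsey_number k (k + 1))"
    unfolding NPO_prop_def
  proof (intro allI impI)
    fix m E assume "ramsey_number k (k + 1) \<le> m" and sg: "simple_graph m E"
    with ramsey consider S where "independent_set m E S" "card S = k"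
      | S where "Defs.clique m E S" "card S = k + 1"
      unfolding ramsey_prop_def by blast
    then show "k \<le> num_nonpos_eigenvalues (adj_matrix m E)"
    proof cases
      case (1 S)
      then show ?thesis using independent_set_nonpos_eigenvalues[OF sg] by fastforce
    next
      case (2 S)
      then show ?thesis using clique_nonpos_eigenvalues[OF sg] by fastforce
    qed
  qed
  moreover from this have "NPO k \<le> ramsey_number k (k + 1)"
    unfolding NPO_def by (rule Least_le)
  ultimately show ?thesis by blast
qed

end
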